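(* Let $b\ge 2$ and $m\ge 1$ be integers. Let $\mathcal P_0,\ldots,\mathcal P_{b-1}$ be (not necessarily distinct) $(0,m-1,2)$-nets in base $b$, each contained in $\mathbb Q(b^{m-1})\times\mathbb Q(b^{m-1})$, and let $\pi_0,\ldots,\pi_{b^{m-1}-1}$ be permutations of $\{0,1,\ldots,b-1\}$. Put $\widehat{\mathcal P}=\bigcup_{j=0}^{b-1}A_b(\mathcal P_j+(j,0))$, where $A_b(x,y)=(x/b,y)$, and $\mathcal P=\psi_{b,m}(\widehat{\mathcal P})$, where $\psi_{b,m}:\mathbb Q(b^m)\times\mathbb Q(b^{m-1})\to\mathbb Q(b^m)\times\mathbb Q(b^m)$ is given by $\psi_{b,m}(x,y)=\left(x,\,y+\pi_{b^{m-1}y}(\lfloor bx\rfloor)\,b^{-m}\right)$. Then $\mathcal P$ is a $(0,m,2)$-net in base $b$.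
   Context: For $k\ge 0$, $\mathbb Q(b^k)=\{0,\frac{1}{b^k},\frac{2}{b^k},\ldots,\frac{b^k-1}{b^k}\}$. An elementary $b$-adic interval in $[0,1)^2$ is a set $\prod_{j=1}^2\left[\frac{a_j}{b^{d_j}},\frac{a_j+1}{b^{d_j}}\right)$ with $d_j\in\mathbb N_0$ and $a_j\in\{0,1,\ldots,b^{d_j}-1\}$; its volume is $b^{-(d_1+d_2)}$. For integers $0\le t\le m$, a $b^m$-element point set in $[0,1)^s$ is a $(t,m,s)$-net in base $b$ if every elementary $b$-adic interval of volume $b^{t-m}$ contains exactly $b^t$ of its points. For $\mathcal P\subseteq\mathbb R^2$ and $v\in\mathbb R^2$, $\mathcal P+v=\{p+v:p\in\mathcal P\}$. *)

theory Defs
  imports Complex_Main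
begin

definition Qgrid :: "nat \<Rightarrow> nat \<Rightarrow> real set" where
  "Qgrid b k = {real a / real b ^ k | a. a < b ^ k}"

definition elem_interval :: "nat \<Rightarrow> nat \<Rightarrow> nat \<Rightarrow> nat \<Rightarrow> nat \<Rightarrow> (real \<times> real) set" where
  "elem_interval b d1 d2 a1 a2 =
     {(x, y). real a1 / real b ^ d1 \<le> x \<and> x < (real a1 + 1) / real b ^ d1 \<and>
              real a2 / real b ^ d2 \<le> y \<and> y < (real a2 + 1) / real b ^ d2}"

definition is_net2 :: "nat \<Rightarrow> nat \<Rightarrow> nat \<Rightarrow> (real \<times> real) set \<Rightarrow> bool" where
  "is_net2 b t m P \<longleftrightarrow> t \<le> m \<and> finite P \<and> card P = b ^ m \<and>
     P \<subseteq> {0..<1} \<times> {0..<1} \<and>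
     (\<forall>d1 d2 a1 a2. d1 + d2 = m - t \<and> a1 < b ^ d1 \<and> a2 < b ^ d2 \<longrightarrow>
        card (P \<inter> elem_interval b d1 d2 a1 a2) = b ^ t)"

definition A_map :: "nat \<Rightarrow> real \<times> real \<Rightarrow> real \<times> real" where
  "A_map b p = (fst p / real b, snd p)"

definition psi_map :: "nat \<Rightarrow> nat \<Rightarrow> (nat \<Rightarrow> nat \<Rightarrow> nat) \<Rightarrow> real \<times> real \<Rightarrow> real \<times> real" where
  "psi_map b m \<pi> p = (fst p,
      snd p + real (\<pi> (nat \<lfloor>real b ^ (m - 1) * snd p\<rfloor>) (nat \<lfloor>real b * fst p\<rfloor>)) / real b ^ m)"

end

theory Submission
  imports Defs
begin

text \<open>Scaling by \<open>b^n\<close> identifies a point set in \<open>Q(b^n)\<^sup>2\<close> with a set \<open>N\<close> of pairs of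
  integers below \<open>b^n\<close>, and an elementary interval of volume \<open>b^-n\<close> with the pairs having
  prescribed leading base-\<open>b\<close> digits; a \<open>(0,n,2)\<close>-net is then a set of \<open>b^n\<close> pairs on which
  every such leading-digit map is injective. In these coordinates the construction sends the
  point \<open>(u,v)\<close> of the \<open>j\<close>-th net to \<open>(j b^n + u, b v + \<pi>\<^sub>v(j))\<close>. If an interval prescribes
  at least one digit of the first coordinate, that digit is \<open>j\<close> and the remaining digits
  describe an interval for the \<open>j\<close>-th net. Otherwise the second coordinate is known exactly,
  which fixes \<open>v\<close> and \<open>\<pi>\<^sub>v(j)\<close>, hence \<open>j\<close> since \<open>\<pi>\<^sub>v\<close> is a permutation, and the \<open>j\<close>-th net has
  only one point with second coordinate \<open>v\<close>.\<close>

lemma mult_add_eq_mult_add_iff: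
  fixes j j' w w' c :: nat
  assumes "w < c" "w' < c"
  shows "j * c + w = j' * c + w' \<longleftrightarrow> j = j' \<and> w = w'"
proof
  assume eq: "j * c + w = j' * c + w'"
  have "j = (j * c + w) div c" "w = (j * c + w) mod c" using assms by auto
  moreover have "j' = (j' * c + w') div c" "w' = (j' * c + w') mod c" using assms by auto
  ultimately show "j = j' \<and> w = w'" using eq by metis
qed simp

lemma mult_add_less_mult:
  fixes j c u B :: nat
  assumes "j < c" "u < B"
  shows "j * B + u < c * B"
proof -
  have "j * B + u < Suc j * B" using assms(2) by simp
  also have "\<dots> \<le> c * B" using assms(1) by (intro mult_le_mono1) simp
  finally show ?thesis .
qed

lemma div_power_less_power:
  fixes x b n d :: nat
  assumes "x < b ^ n" "b > 0"
  shows "x div b ^ (n - d) < b ^ d"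
proof (cases "d \<le> n")
  case True
  then have "b ^ n = b ^ d * b ^ (n - d)" by (simp flip: power_add)
  then show ?thesis using assms by (simp add: div_less_iff_less_mult)
next
  case False
  then have "b ^ n \<le> b ^ d" using assms(2) by (simp add: power_increasing)
  then show ?thesis using assms False by simp
qed

lemma mult_power_add_div_power:
  fixes j u b n d :: nat
  assumes "d \<le> n" "b > 0"
  shows "(j * b ^ n + u) div b ^ (n - d) = j * b ^ d + u div b ^ (n - d)"
proof -
  have "j * b ^ n + u = u + (j * b ^ d) * b ^ (n - d)"
    using assms(1) by (metis add.commute le_add_diff_inverse mult.assoc power_add)
  also have "\<dots> div b ^ (n - d) = u div b ^ (n - d) + j * b ^ d"
    using assms(2) by (subst div_mult_self1) simp_all
  finally show ?thesis by simp
qed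

lemma mult_add_div_Suc_power:
  fixes b v r d :: nat
  assumes "r < b"
  shows "(b * v + r) div b ^ Suc d = v div b ^ d"
  using assms by (simp add: div_mult2_eq)

lemma inj_on_iff_fibres_card_1:
  assumes "f ` N \<subseteq> T" "finite T" "card N = card T"
  shows "inj_on f N \<longleftrightarrow> (\<forall>t\<in>T. card {x\<in>N. f x = t} = 1)"
proof
  assume inj: "inj_on f N"
  then have "f ` N = T" using assms by (metis card_image card_subset_eq)
  show "\<forall>t\<in>T. card {x\<in>N. f x = t} = 1"
  proof
    fix t assume "t \<in> T"
    then obtain x where "x \<in> N" "f x = t" using \<open>f ` N = T\<close> by auto
    then have "{x\<in>N. f x = t} = {x}" using inj by (auto dest: inj_onD)
    then show "card {x\<in>N. f x = t} = 1" by simp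
  qed
next
  assume fib: "\<forall>t\<in>T. card {x\<in>N. f x = t} = 1"
  show "inj_on f N"
  proof (rule inj_onI)
    fix x y assume xy: "x \<in> N" "y \<in> N" "f x = f y"
    then have "card {z\<in>N. f z = f x} = 1" using fib assms(1) by auto
    then obtain z where z: "{z'\<in>N. f z' = f x} = {z}" by (rule card_1_singletonE)
    have "x \<in> {z'\<in>N. f z' = f x}" "y \<in> {z'\<in>N. f z' = f x}" using xy by auto
    then show "x = y" unfolding z by simp
  qed
qed

definition grid_point :: "nat \<Rightarrow> nat \<Rightarrow> nat \<times> nat \<Rightarrow> real \<times> real" where
  "grid_point b n p = (real (fst p) / real b ^ n, real (snd p) / real b ^ n)"

definition leading_digits :: "nat \<Rightarrow> nat \<Rightarrow> nat \<Rightarrow> nat \<Rightarrow> nat \<times> nat \<Rightarrow> nat \<times> nat" where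
  "leading_digits b n d1 d2 p = (fst p div b ^ (n - d1), snd p div b ^ (n - d2))"

text \<open>With \<open>b^n\<close> points and \<open>b^n\<close> boxes of each shape, injectivity of the leading-digit
  maps is the same as every box containing exactly one point.\<close>
definition int_net :: "nat \<Rightarrow> nat \<Rightarrow> (nat \<times> nat) set \<Rightarrow> bool" where
  "int_net b n N \<longleftrightarrow> N \<subseteq> {..<b ^ n} \<times> {..<b ^ n} \<and> card N = b ^ n \<and>
     (\<forall>d1 d2. d1 + d2 = n \<longrightarrow> inj_on (leading_digits b n d1 d2) N)"

lemma int_net_inj_on_leading_digits:
  "int_net b n N \<Longrightarrow> d1 + d2 = n \<Longrightarrow> inj_on (leading_digits b n d1 d2) N"
  by (simp add: int_net_def)

lemma inj_grid_point: "b > 0 \<Longrightarrow> inj (grid_point b n)"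
  by (auto simp: inj_on_def grid_point_def prod_eq_iff)

lemma leading_digits_in_box:
  assumes "b > 0" "p \<in> {..<b ^ n} \<times> {..<b ^ n}"
  shows "leading_digits b n d1 d2 p \<in> {..<b ^ d1} \<times> {..<b ^ d2}"
  using assms by (auto simp: leading_digits_def div_power_less_power)

lemma real_div_power_interval_iff:
  fixes x a b d n :: nat
  assumes "b > 0" "d \<le> n"
  shows "real a / real b ^ d \<le> real x / real b ^ n \<and> real x / real b ^ n < (real a + 1) / real b ^ d
         \<longleftrightarrow> x div b ^ (n - d) = a"
proof -
  define c where "c = b ^ (n - d)"
  have c: "c > 0" using assms(1) by (simp add: c_def)
  have "real b ^ n = real b ^ d * real c"
    using assms(2) by (simp add: c_def flip: power_add)
  then have "real a / real b ^ d \<le> real x / real b ^ n \<and> real x / real b ^ n < (real a + 1) / real b ^ d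
      \<longleftrightarrow> real a * real c \<le> real x \<and> real x < (real a + 1) * real c"
    using assms(1) c by (simp add: field_simps)
  also have "\<dots> \<longleftrightarrow> real (a * c) \<le> real x \<and> real x < real ((a + 1) * c)"
    by (simp add: algebra_simps)
  also have "\<dots> \<longleftrightarrow> a * c \<le> x \<and> x < (a + 1) * c"
    by (simp only: of_nat_le_iff of_nat_less_iff)
  also have "\<dots> \<longleftrightarrow> a \<le> x div c \<and> x div c < a + 1"
    using c by (simp only: less_eq_div_iff_mult_less_eq div_less_iff_less_mult)
  also have "\<dots> \<longleftrightarrow> x div c = a" by auto
  finally show ?thesis by (simp add: c_def)
qed

lemma grid_point_in_elem_interval_iff:
  assumes "b > 0" "d1 \<le> n" "d2 \<le> n"
  shows "grid_point b n p \<in> elem_interval b d1 d2 a1 a2 \<longleftrightarrow> leading_digits b n d1 d2 p = (a1, a2)"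
  using real_div_power_interval_iff[OF assms(1,2), of a1 "fst p"]
    real_div_power_interval_iff[OF assms(1,3), of a2 "snd p"]
  by (auto simp: elem_interval_def grid_point_def leading_digits_def)

lemma is_net2_grid_point_image_iff:
  assumes b: "b > 0" and sub: "N \<subseteq> {..<b ^ n} \<times> {..<b ^ n}"
  shows "is_net2 b 0 n (grid_point b n ` N) \<longleftrightarrow> int_net b n N"
proof -
  have inj: "inj_on (grid_point b n) N" using inj_grid_point[OF b] by (rule inj_on_subset) simp
  have fin: "finite N" using sub finite_subset by blast
  have unit_square: "grid_point b n ` N \<subseteq> {0..<1} \<times> {0..<1}"
    using sub b by (auto simp: grid_point_def)
  have count: "card (grid_point b n ` N \<inter> elem_interval b d1 d2 a1 a2)
      = card {p\<in>N. leading_digits b n d1 d2 p = (a1, a2)}"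
    if "d1 + d2 = n" for d1 d2 a1 a2
  proof -
    have "grid_point b n ` N \<inter> elem_interval b d1 d2 a1 a2
        = grid_point b n ` {p\<in>N. leading_digits b n d1 d2 p = (a1, a2)}"
      using grid_point_in_elem_interval_iff[OF b, of d1 n d2] that by auto
    then show ?thesis using inj by (simp add: card_image inj_on_subset)
  qed
  have fibres: "inj_on (leading_digits b n d1 d2) N \<longleftrightarrow>
      (\<forall>a1 a2. a1 < b ^ d1 \<and> a2 < b ^ d2 \<longrightarrow> card {p\<in>N. leading_digits b n d1 d2 p = (a1, a2)} = 1)"
    if "d1 + d2 = n" "card N = b ^ n" for d1 d2
  proof -
    have "card N = card ({..<b ^ d1} \<times> {..<b ^ d2})"
      using that by (auto simp: card_cartesian_product power_add)
    then show ?thesis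
      using inj_on_iff_fibres_card_1[of "leading_digits b n d1 d2" N "{..<b ^ d1} \<times> {..<b ^ d2}"]
        leading_digits_in_box[OF b] sub by blast
  qed
  show ?thesis
    unfolding is_net2_def int_net_def using fin unit_square sub count fibres
    by (auto simp: card_image[OF inj])
qed

text \<open>The composite \<open>psi_map b (n+1) \<circ> A_map b \<circ> (+ (j, 0))\<close> in integer coordinates: the
  input scaled by \<open>b^n\<close>, the output by \<open>b^(n+1)\<close>.\<close>
definition interleave_map :: "nat \<Rightarrow> nat \<Rightarrow> (nat \<Rightarrow> nat \<Rightarrow> nat) \<Rightarrow> nat \<times> nat \<times> nat \<Rightarrow> nat \<times> nat" where
  "interleave_map b n \<pi> q = (case q of (j, u, v) \<Rightarrow> (j * b ^ n + u, b * v + \<pi> v j))"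

lemma leading_digits_interleave_map_Suc:
  assumes "b > 0" "d + d2 = n" "\<pi> v j < b"
  shows "leading_digits b (Suc n) (Suc d) d2 (interleave_map b n \<pi> (j, u, v))
       = (j * b ^ d + u div b ^ (n - d), v div b ^ d)"
proof -
  have "Suc n - d2 = Suc d" using assms(2) by simp
  then show ?thesis
    using assms mult_power_add_div_power[of d n b j u] mult_add_div_Suc_power[of "\<pi> v j" b v d]
    by (simp add: leading_digits_def interleave_map_def)
qed

lemma inj_on_leading_digits_interleave_map:
  assumes b: "b > 0"
    and nets: "\<And>j. j < b \<Longrightarrow> int_net b n (N j)"
    and perms: "\<And>v. v < b ^ n \<Longrightarrow> bij_betw (\<pi> v) {..<b} {..<b}"
    and d: "d1 + d2 = Suc n"
  shows "inj_on (leading_digits b (Suc n) d1 d2 \<circ> interleave_map b n \<pi>) (Sigma {..<b} N)"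
proof (rule inj_onI)
  fix q q' assume q: "q \<in> Sigma {..<b} N" and q': "q' \<in> Sigma {..<b} N"
    and eq: "(leading_digits b (Suc n) d1 d2 \<circ> interleave_map b n \<pi>) q
           = (leading_digits b (Suc n) d1 d2 \<circ> interleave_map b n \<pi>) q'"
  obtain j u v j' u' v' where qs: "q = (j, u, v)" "q' = (j', u', v')" by (cases q, cases q')
  have j: "j < b" "j' < b" and uv: "(u, v) \<in> N j" "(u', v') \<in> N j'" using q q' qs by auto
  have sq: "u < b ^ n" "v < b ^ n" "u' < b ^ n" "v' < b ^ n"
    using nets j uv by (auto simp: int_net_def)
  have \<pi>: "\<pi> v j < b" "\<pi> v' j' < b"
    using bij_betw_apply[OF perms] sq j by auto
  show "q = q'"
  proof (cases d1)
    case 0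
    then have "b * v + \<pi> v j = b * v' + \<pi> v' j'"
      using eq d qs by (simp add: leading_digits_def interleave_map_def)
    then have "v * b + \<pi> v j = v' * b + \<pi> v' j'" by (simp add: mult.commute)
    then have v: "v' = v" and "\<pi> v j' = \<pi> v j"
      using mult_add_eq_mult_add_iff[OF \<pi>] by auto
    then have "j' = j" using perms[OF sq(2)] j by (auto simp: bij_betw_def dest: inj_onD)
    moreover have "leading_digits b n 0 n (u, v) = leading_digits b n 0 n (u', v')"
      using sq v by (simp add: leading_digits_def)
    ultimately show ?thesis
      using int_net_inj_on_leading_digits[OF nets[OF j(1)], of 0 n] uv qs v by (auto dest: inj_onD)
  next
    case (Suc d)
    then have dn: "d + d2 = n" using d by simp
    have "j * b ^ d + u div b ^ (n - d) = j' * b ^ d + u' div b ^ (n - d)"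
      and v: "v div b ^ d = v' div b ^ d"
      using eq qs Suc leading_digits_interleave_map_Suc[OF b dn] \<pi> by auto
    then have j': "j' = j" and u: "u div b ^ (n - d) = u' div b ^ (n - d)"
      using mult_add_eq_mult_add_iff div_power_less_power[OF sq(1) b] div_power_less_power[OF sq(3) b]
      by metis+
    have "n - d2 = d" using dn by simp
    then have "leading_digits b n d d2 (u, v) = leading_digits b n d d2 (u', v')"
      using u v by (simp add: leading_digits_def)
    then show ?thesis
      using int_net_inj_on_leading_digits[OF nets[OF j(1)] dn] uv qs j' by (auto dest: inj_onD)
  qed
qed

lemma int_net_interleave:
  assumes b: "b > 0"
    and nets: "\<And>j. j < b \<Longrightarrow> int_net b n (N j)"
    and perms: "\<And>v. v < b ^ n \<Longrightarrow> bij_betw (\<pi> v) {..<b} {..<b}"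
  shows "int_net b (Suc n) (interleave_map b n \<pi> ` Sigma {..<b} N)"
proof -
  have injs: "inj_on (leading_digits b (Suc n) d1 d2 \<circ> interleave_map b n \<pi>) (Sigma {..<b} N)"
    if "d1 + d2 = Suc n" for d1 d2
    using inj_on_leading_digits_interleave_map[OF b nets perms that] .
  have inj: "inj_on (interleave_map b n \<pi>) (Sigma {..<b} N)"
    using injs[of "Suc n" 0] by (rule inj_on_imageI2) simp
  have "finite (N j)" "card (N j) = b ^ n" if "j < b" for j
    using nets[OF that] by (auto simp: int_net_def finite_subset)
  then have "card (Sigma {..<b} N) = (\<Sum>j<b. b ^ n)" by simp
  then have card: "card (interleave_map b n \<pi> ` Sigma {..<b} N) = b ^ Suc n"
    by (simp add: card_image[OF inj])
  have sub: "interleave_map b n \<pi> ` Sigma {..<b} N \<subseteq> {..<b ^ Suc n} \<times> {..<b ^ Suc n}"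
  proof (rule image_subsetI)
    fix q assume "q \<in> Sigma {..<b} N"
    obtain j u v where q: "q = (j, u, v)" "j < b" "(u, v) \<in> N j"
      using \<open>q \<in> Sigma {..<b} N\<close> by (cases q) auto
    then have u: "u < b ^ n" and v: "v < b ^ n" using nets by (auto simp: int_net_def)
    then have "\<pi> v j < b" using bij_betw_apply[OF perms] q by auto
    then show "interleave_map b n \<pi> q \<in> {..<b ^ Suc n} \<times> {..<b ^ Suc n}"
      using q u v mult_add_less_mult[of j b u "b ^ n"] mult_add_less_mult[of v "b ^ n" "\<pi> v j" b]
      by (simp add: interleave_map_def mult.commute)
  qed
  show ?thesis
    unfolding int_net_def using sub card injs by (blast intro: inj_on_imageI)
qed

lemma Qgrid_net_as_grid_point_image:
  assumes b: "b > 0" and net: "is_net2 b 0 n P" and grid: "P \<subseteq> Qgrid b n \<times> Qgrid b n"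
  obtains N where "int_net b n N" "P = grid_point b n ` N"
proof
  let ?N = "{p \<in> {..<b ^ n} \<times> {..<b ^ n}. grid_point b n p \<in> P}"
  show P: "P = grid_point b n ` ?N"
  proof (intro equalityI subsetI)
    fix q assume "q \<in> P"
    moreover obtain u v where "u < b ^ n" "v < b ^ n" "q = (real u / real b ^ n, real v / real b ^ n)"
      using grid \<open>q \<in> P\<close> by (auto simp: Qgrid_def)
    ultimately show "q \<in> grid_point b n ` ?N"
      by (auto simp: grid_point_def image_iff intro!: bexI[of _ "(u, v)"])
  qed auto
  show "int_net b n ?N"
    using net is_net2_grid_point_image_iff[OF b, of ?N n] P by auto
qed

lemma psi_map_A_map_grid_point:
  assumes "b > 0" "u < b ^ n"
  shows "psi_map b (Suc n) \<pi> (A_map b (fst (grid_point b n (u, v)) + real j, snd (grid_point b n (u, v))))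
       = grid_point b (Suc n) (interleave_map b n \<pi> (j, u, v))"
proof -
  have "\<lfloor>real u / real b ^ n\<rfloor> = 0" using assms by (simp add: floor_eq_iff)
  then have x: "nat \<lfloor>real b * ((real u / real b ^ n + real j) / real b)\<rfloor> = j"
    using assms(1) by simp
  have y: "nat \<lfloor>real b ^ n * (real v / real b ^ n)\<rfloor> = v" using assms(1) by simp
  have ex: "(real u / real b ^ n + real j) / real b = real (j * b ^ n + u) / real b ^ Suc n"
    using assms(1) by (simp add: field_simps)
  have ey: "real v / real b ^ n + real (\<pi> v j) / real b ^ Suc n = real (b * v + \<pi> v j) / real b ^ Suc n"
    using assms(1) by (simp add: field_simps)
  show ?thesis
    unfolding psi_map_def A_map_def grid_point_def interleave_map_def
    by (simp only: fst_conv snd_conv prod.case diff_Suc_1 x y) (simp only: ex ey)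
qed

lemma psi_map_A_map_image_eq_grid_point_interleave:
  assumes b: "b > 0" and sq: "\<And>j. j < b \<Longrightarrow> N j \<subseteq> {..<b ^ n} \<times> {..<b ^ n}"
  shows "psi_map b (Suc n) \<pi> ` (\<Union>j<b. A_map b ` ((\<lambda>p. (fst p + real j, snd p)) ` grid_point b n ` N j))
       = grid_point b (Suc n) ` interleave_map b n \<pi> ` Sigma {..<b} N"
proof -
  have "psi_map b (Suc n) \<pi> ` (\<Union>j<b. A_map b ` ((\<lambda>p. (fst p + real j, snd p)) ` grid_point b n ` N j))
      = (\<Union>j<b. (\<lambda>(u, v). psi_map b (Suc n) \<pi>
           (A_map b (fst (grid_point b n (u, v)) + real j, snd (grid_point b n (u, v))))) ` N j)"
    by (simp add: image_UN image_image split_def)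
  also have "\<dots> = (\<Union>j<b. (\<lambda>(u, v). grid_point b (Suc n) (interleave_map b n \<pi> (j, u, v))) ` N j)"
    using sq by (intro SUP_cong image_cong) (auto intro!: psi_map_A_map_grid_point[OF b])
  also have "\<dots> = grid_point b (Suc n) ` interleave_map b n \<pi> ` Sigma {..<b} N"
    by auto
  finally show ?thesis .
qed

theorem mainTheorem6:
  fixes b m :: nat and Ps :: "nat \<Rightarrow> (real \<times> real) set" and \<pi> :: "nat \<Rightarrow> nat \<Rightarrow> nat"
  assumes "b \<ge> 2" and "m \<ge> 1"
    and "\<And>j. j < b \<Longrightarrow> is_net2 b 0 (m - 1) (Ps j)"
    and "\<And>j. j < b \<Longrightarrow> Ps j \<subseteq> Qgrid b (m - 1) \<times> Qgrid b (m - 1)"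
    and "\<And>i. i < b ^ (m - 1) \<Longrightarrow> bij_betw (\<pi> i) {..<b} {..<b}"
  shows "is_net2 b 0 m
           (psi_map b m \<pi> ` (\<Union>j<b. A_map b ` ((\<lambda>p. (fst p + real j, snd p)) ` Ps j)))"
proof -
  obtain n where m: "m = Suc n" using assms(2) by (cases m) auto
  have b: "b > 0" using assms(1) by simp
  have "\<forall>j\<in>{..<b}. \<exists>N. int_net b n N \<and> Ps j = grid_point b n ` N"
    using Qgrid_net_as_grid_point_image[OF b] assms(3,4) m by (metis diff_Suc_1 lessThan_iff)
  then obtain N where nets: "\<And>j. j < b \<Longrightarrow> int_net b n (N j)"
    and Ps: "\<And>j. j < b \<Longrightarrow> Ps j = grid_point b n ` N j"
    by (metis lessThan_iff)
  have "(\<Union>j<b. A_map b ` ((\<lambda>p. (fst p + real j, snd p)) ` Ps j))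
      = (\<Union>j<b. A_map b ` ((\<lambda>p. (fst p + real j, snd p)) ` grid_point b n ` N j))"
    using Ps by (intro SUP_cong) simp_all
  then have "psi_map b m \<pi> ` (\<Union>j<b. A_map b ` ((\<lambda>p. (fst p + real j, snd p)) ` Ps j))
      = grid_point b m ` interleave_map b n \<pi> ` Sigma {..<b} N"
    using psi_map_A_map_image_eq_grid_point_interleave[OF b] nets m by (simp add: int_net_def)
  moreover have "int_net b m (interleave_map b n \<pi> ` Sigma {..<b} N)"
    using int_net_interleave[OF b nets] assms(5) m by simp
  ultimately show ?thesis
    using is_net2_grid_point_image_iff[OF b] by (metis int_net_def)
qed

end
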